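(* Let $L$ be a finite-dimensional solvable Lie algebra over an arbitrary field $F$ and let $U$ be a proper subalgebra of $L$. Then the following are equivalent: (i) $U$ is modular in $L$; (ii) $U$ is semi-modular in $L$; (iii) $U$ is a quasi-ideal of $L$.
   Context: For subalgebras $U,B$ of a Lie algebra $L$, $\langle U,B\rangle$ denotes the subalgebra generated by $U\cup B$. A subalgebra $B$ covers a subalgebra $A$ if $A$ is a maximal subalgebra of $B$. A subalgebra $U$ of $L$ is modular in $L$ if $\langle U,B\rangle\cap C=\langle B,U\cap C\rangle$ for all subalgebras $B\subseteq C$ of $L$, and $\langle U,B\rangle\cap C=\langle B\cap C,U\rangle$ for all subalgebras $B,C$ of $L$ with $U\subseteq C$. $U$ is upper modular (um) in $L$ if whenever $B$ is a subalgebra of $L$ which covers $U\cap B$, then $\langle U,B\rangle$ covers $U$; $U$ is lower modular (lm) in $L$ if whenever $B$ is a subalgebra of $L$ such that $\langle U,B\rangle$ covers $U$, then $B$ covers $U\cap B$; $U$ is semi-modular (sm) in $L$ if it is both um and lm in $L$. A subalgebra $Q$ of $L$ is a quasi-ideal of $L$ if $[Q,V]\subseteq Q+V$ for every subspace $V$ of $L$. *)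

theory Defs
  imports Main "HOL.Vector_Spaces"
begin

text \<open>A Lie algebra over a field: vector space structure given by the scalar
multiplication s on the ambient type 'v (the whole type is the Lie algebra L),
with a bilinear, alternating bracket satisfying the Jacobi identity.\<close>

definition lie_algebra :: "('k::field \<Rightarrow> 'v::ab_group_add \<Rightarrow> 'v) \<Rightarrow> ('v \<Rightarrow> 'v \<Rightarrow> 'v) \<Rightarrow> bool" where
  "lie_algebra s br \<longleftrightarrow> Vector_Spaces.vector_space s
     \<and> (\<forall>x. Vector_Spaces.linear s s (br x)) \<and> (\<forall>y. Vector_Spaces.linear s s (\<lambda>x. br x y))
     \<and> (\<forall>x. br x x = 0)
     \<and> (\<forall>x y z. br x (br y z) + br y (br z x) + br z (br x y) = 0)"

definition fin_dim :: "('k::field \<Rightarrow> 'v::ab_group_add \<Rightarrow> 'v) \<Rightarrow> bool" where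
  "fin_dim s \<longleftrightarrow> (\<exists>B. finite B \<and> module.span s B = UNIV)"

fun derived_series :: "('k::field \<Rightarrow> 'v::ab_group_add \<Rightarrow> 'v) \<Rightarrow> ('v \<Rightarrow> 'v \<Rightarrow> 'v) \<Rightarrow> nat \<Rightarrow> 'v set" where
  "derived_series s br 0 = UNIV"
| "derived_series s br (Suc n) =
     module.span s {br x y | x y. x \<in> derived_series s br n \<and> y \<in> derived_series s br n}"

definition solvable_lie :: "('k::field \<Rightarrow> 'v::ab_group_add \<Rightarrow> 'v) \<Rightarrow> ('v \<Rightarrow> 'v \<Rightarrow> 'v) \<Rightarrow> bool" where
  "solvable_lie s br \<longleftrightarrow> (\<exists>n. derived_series s br n = {0})"

definition lie_subalgebra :: "('k::field \<Rightarrow> 'v::ab_group_add \<Rightarrow> 'v) \<Rightarrow> ('v \<Rightarrow> 'v \<Rightarrow> 'v) \<Rightarrow> 'v set \<Rightarrow> bool" where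
  "lie_subalgebra s br A \<longleftrightarrow> module.subspace s A \<and> (\<forall>x\<in>A. \<forall>y\<in>A. br x y \<in> A)"

definition gen :: "('k::field \<Rightarrow> 'v::ab_group_add \<Rightarrow> 'v) \<Rightarrow> ('v \<Rightarrow> 'v \<Rightarrow> 'v) \<Rightarrow> 'v set \<Rightarrow> 'v set" where
  "gen s br X = \<Inter>{A. lie_subalgebra s br A \<and> X \<subseteq> A}"

definition covers :: "('k::field \<Rightarrow> 'v::ab_group_add \<Rightarrow> 'v) \<Rightarrow> ('v \<Rightarrow> 'v \<Rightarrow> 'v) \<Rightarrow> 'v set \<Rightarrow> 'v set \<Rightarrow> bool" where
  "covers s br B A \<longleftrightarrow> lie_subalgebra s br A \<and> lie_subalgebra s br B \<and> A \<subset> B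
     \<and> (\<forall>C. lie_subalgebra s br C \<and> A \<subseteq> C \<and> C \<subseteq> B \<longrightarrow> C = A \<or> C = B)"

definition modular :: "('k::field \<Rightarrow> 'v::ab_group_add \<Rightarrow> 'v) \<Rightarrow> ('v \<Rightarrow> 'v \<Rightarrow> 'v) \<Rightarrow> 'v set \<Rightarrow> bool" where
  "modular s br U \<longleftrightarrow>
     (\<forall>B C. lie_subalgebra s br B \<and> lie_subalgebra s br C \<and> B \<subseteq> C \<longrightarrow>
        gen s br (U \<union> B) \<inter> C = gen s br (B \<union> (U \<inter> C)))
   \<and> (\<forall>B C. lie_subalgebra s br B \<and> lie_subalgebra s br C \<and> U \<subseteq> C \<longrightarrow>
        gen s br (U \<union> B) \<inter> C = gen s br ((B \<inter> C) \<union> U))"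

definition upper_modular :: "('k::field \<Rightarrow> 'v::ab_group_add \<Rightarrow> 'v) \<Rightarrow> ('v \<Rightarrow> 'v \<Rightarrow> 'v) \<Rightarrow> 'v set \<Rightarrow> bool" where
  "upper_modular s br U \<longleftrightarrow>
     (\<forall>B. lie_subalgebra s br B \<and> covers s br B (U \<inter> B) \<longrightarrow> covers s br (gen s br (U \<union> B)) U)"

definition lower_modular :: "('k::field \<Rightarrow> 'v::ab_group_add \<Rightarrow> 'v) \<Rightarrow> ('v \<Rightarrow> 'v \<Rightarrow> 'v) \<Rightarrow> 'v set \<Rightarrow> bool" where
  "lower_modular s br U \<longleftrightarrow>
     (\<forall>B. lie_subalgebra s br B \<and> covers s br (gen s br (U \<union> B)) U \<longrightarrow> covers s br B (U \<inter> B))"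

definition semi_modular :: "('k::field \<Rightarrow> 'v::ab_group_add \<Rightarrow> 'v) \<Rightarrow> ('v \<Rightarrow> 'v \<Rightarrow> 'v) \<Rightarrow> 'v set \<Rightarrow> bool" where
  "semi_modular s br U \<longleftrightarrow> upper_modular s br U \<and> lower_modular s br U"

definition quasi_ideal :: "('k::field \<Rightarrow> 'v::ab_group_add \<Rightarrow> 'v) \<Rightarrow> ('v \<Rightarrow> 'v \<Rightarrow> 'v) \<Rightarrow> 'v set \<Rightarrow> bool" where
  "quasi_ideal s br Q \<longleftrightarrow> lie_subalgebra s br Q \<and>
     (\<forall>V. module.subspace s V \<longrightarrow>
        module.span s {br q v | q v. q \<in> Q \<and> v \<in> V} \<subseteq> {q + v | q v. q \<in> Q \<and> v \<in> V})"

end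

theory Submission imports Defs begin

(* * quasi-ideal ==> modular: for a quasi-ideal U and a subalgebra B the subspace sum
     U + B is already a subalgebra, so the join <U,B> is U + B, and both modular laws
     reduce to Dedekind's modular law for subspaces.
   * modular ==> upper and lower modular: pure lattice arguments with the two
     modular laws.
   * semi-modular ==> quasi-ideal (the solvable case): for x outside U the line Fx
     covers its meet with U, so by upper modularity M = <U,x> covers U.  A suitable
     term of the derived series cut down to M gives an ideal A of M, not inside U,
     with [A,A] inside U.  Lower modularity forces A to cover U \<inter> A, hence
     A = (U \<inter> A) + Fa, and then M = U + Fa = U + Fx.  So [U,x] \<subseteq> U + Fx,
     which is the element-wise characterisation of quasi-ideals. *)

definition set_sum :: "'v::ab_group_add set \<Rightarrow> 'v set \<Rightarrow> 'v set" where
  "set_sum P Q = {p + q | p q. p \<in> P \<and> q \<in> Q}"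

lemma set_sum_commute: "set_sum P Q = set_sum Q P"
  unfolding set_sum_def using add.commute by blast

locale lie = fixes s :: "'k::field \<Rightarrow> 'v::ab_group_add \<Rightarrow> 'v" and br :: "'v \<Rightarrow> 'v \<Rightarrow> 'v"
  assumes lie: "lie_algebra s br"
begin

sublocale vector_space s using lie unfolding lie_algebra_def by auto

lemma br_add_r: "br x (y + z) = br x y + br x z"
  and br_add_l: "br (x + y) z = br x z + br y z"
  and br_scale_r: "br x (s c y) = s c (br x y)"
  and br_scale_l: "br (s c x) y = s c (br x y)"
  and br_alt: "br x x = 0"
  and br_jacobi: "br x (br y z) + br y (br z x) + br z (br x y) = 0"
  using lie unfolding lie_algebra_def linear_iff by auto

lemma br_0_r [simp]: "br x 0 = 0"
  using br_add_r[of x 0 0] by simp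

lemma br_0_l [simp]: "br 0 x = 0"
  using br_add_l[of 0 0 x] by simp

lemma br_neg_r: "br x (- y) = - br x y"
  using br_add_r[of x y "- y"] by (simp add: eq_neg_iff_add_eq_0 add.commute)

lemma br_anti: "br x y = - br y x"
proof -
  have "br x y + br y x = br (x + y) (x + y)" by (simp only: br_add_l br_add_r) (simp add: br_alt)
  also have "\<dots> = 0" by (rule br_alt)
  finally show ?thesis by (metis eq_neg_iff_add_eq_0)
qed

text \<open>The Jacobi identity says that each inner derivation is a derivation.\<close>
lemma br_derivation: "br m (br x y) = br (br m x) y + br x (br m y)"
proof -
  have "br m (br x y) + br x (br y m) + br y (br m x) = 0" by (rule br_jacobi)
  moreover have "br x (br y m) = - br x (br m y)" using br_anti[of y m] br_neg_r by simp
  moreover have "br y (br m x) = - br (br m x) y" by (rule br_anti)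
  ultimately show ?thesis by (simp add: algebra_simps eq_neg_iff_add_eq_0)
qed

lemma subspace_preimage_br_r: "subspace T \<Longrightarrow> subspace {z. br m z \<in> T}"
  unfolding subspace_def by (auto simp: br_add_r br_scale_r)

lemma subspace_preimage_br_l: "subspace T \<Longrightarrow> subspace {w. br w z \<in> T}"
  unfolding subspace_def by (auto simp: br_add_l br_scale_l)

lemma subalgebra_subspace: "lie_subalgebra s br A \<Longrightarrow> subspace A"
  and subalgebra_closed: "lie_subalgebra s br A \<Longrightarrow> x \<in> A \<Longrightarrow> y \<in> A \<Longrightarrow> br x y \<in> A"
  unfolding lie_subalgebra_def by auto

lemma subalgebra_Int:
  "lie_subalgebra s br A \<Longrightarrow> lie_subalgebra s br B \<Longrightarrow> lie_subalgebra s br (A \<inter> B)"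
  unfolding lie_subalgebra_def subspace_def by auto

lemma gen_subalgebra: "lie_subalgebra s br (gen s br X)"
  unfolding lie_subalgebra_def gen_def subspace_def by auto

lemma gen_incl: "X \<subseteq> gen s br X"
  unfolding gen_def by auto

lemma gen_least: "lie_subalgebra s br A \<Longrightarrow> X \<subseteq> A \<Longrightarrow> gen s br X \<subseteq> A"
  unfolding gen_def by auto

lemma gen_id: "lie_subalgebra s br A \<Longrightarrow> gen s br A = A"
  by (meson gen_incl gen_least order_refl subset_antisym)

lemma gen_mono: "X \<subseteq> Y \<Longrightarrow> gen s br X \<subseteq> gen s br Y"
  by (meson gen_incl gen_least gen_subalgebra order_trans)

lemma gen_eqI: "lie_subalgebra s br S \<Longrightarrow> X \<subseteq> S \<Longrightarrow> S \<subseteq> gen s br X \<Longrightarrow> gen s br X = S"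
  using gen_least by blast

lemma set_sum_subset_gen: "set_sum P Q \<subseteq> gen s br (P \<union> Q)"
  unfolding set_sum_def
  using gen_incl[of "P \<union> Q"] subspace_add[OF subalgebra_subspace[OF gen_subalgebra]] by blast

lemma subalgebra_span:
  assumes gens: "\<And>w t. w \<in> X \<Longrightarrow> t \<in> X \<Longrightarrow> br w t \<in> span X"
  shows "lie_subalgebra s br (span X)"
proof -
  have right: "br w t \<in> span X" if w: "w \<in> X" and t: "t \<in> span X" for w t
  proof -
    have "span X \<subseteq> {t. br w t \<in> span X}"
      using gens w by (intro span_minimal subspace_preimage_br_r) auto
    then show ?thesis using t by auto
  qed
  have "subspace (\<Inter>t\<in>span X. {w. br w t \<in> span X})"
    by (intro subspace_Int subspace_preimage_br_l) auto
  then have "span X \<subseteq> (\<Inter>t\<in>span X. {w. br w t \<in> span X})"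
    using right by (intro span_minimal) auto
  then show ?thesis unfolding lie_subalgebra_def by auto
qed

lemma subalgebra_span_insert:
  assumes U: "lie_subalgebra s br U" and Ua: "\<And>u. u \<in> U \<Longrightarrow> br u a \<in> span (insert a U)"
  shows "lie_subalgebra s br (span (insert a U))"
proof (rule subalgebra_span)
  fix w t assume w: "w \<in> insert a U" and t: "t \<in> insert a U"
  consider "w = a" "t = a" | "w \<in> U" "t = a" | "w = a" "t \<in> U" | "w \<in> U" "t \<in> U"
    using w t by blast
  then show "br w t \<in> span (insert a U)"
  proof cases
    case 1 then show ?thesis by (simp add: br_alt span_zero)
  next
    case 2 then show ?thesis using Ua by blast
  next
    case 3 then show ?thesis using Ua[of t] br_anti[of a t] span_neg by fastforce
  next
    case 4 then show ?thesis using subalgebra_closed[OF U] by (blast intro: span_base)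
  qed
qed

lemma covers_line:
  assumes U: "lie_subalgebra s br U" and x: "x \<notin> U"
  shows "covers s br (span {x}) (U \<inter> span {x})"
proof -
  have B: "lie_subalgebra s br (span {x})"
    by (rule subalgebra_span) (simp add: br_alt span_zero)
  have "span {x} \<subseteq> C" if C: "lie_subalgebra s br C" "C \<subseteq> span {x}" "\<not> C \<subseteq> U" for C
  proof -
    obtain c where c: "c \<in> C" "c \<notin> U" using C(3) by blast
    then obtain k where k: "c = s k x" using C(2) unfolding span_singleton by blast
    have "k \<noteq> 0" using k c subspace_0[OF subalgebra_subspace[OF U]] by auto
    then have "x = s (inverse k) c" using k by simp
    then have "x \<in> C" using subspace_scale[OF subalgebra_subspace[OF C(1)] c(1)] by simp
    then show ?thesis using subalgebra_subspace[OF C(1)] by (intro span_minimal) auto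
  qed
  moreover have "x \<in> span {x}" by (simp add: span_base)
  ultimately show ?thesis
    unfolding covers_def using subalgebra_Int[OF U B] B x by blast
qed

subsection \<open>The derived series\<close>

lemma derived_subspace: "subspace (derived_series s br k)"
  by (cases k) auto

lemma derived_ideal: "d \<in> derived_series s br k \<Longrightarrow> br m d \<in> derived_series s br k"
proof (induction k arbitrary: m d)
  case 0 then show ?case by simp
next
  case (Suc k)
  let ?G = "{br x y | x y. x \<in> derived_series s br k \<and> y \<in> derived_series s br k}"
  have "?G \<subseteq> {z. br m z \<in> span ?G}"
  proof
    fix z assume "z \<in> ?G"
    then obtain x y where z: "z = br x y" "x \<in> derived_series s br k" "y \<in> derived_series s br k"
      by blast
    have "br (br m x) y \<in> ?G" "br x (br m y) \<in> ?G" using z Suc.IH by blast+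
    then have "br (br m x) y + br x (br m y) \<in> span ?G" by (intro span_add span_base)
    then show "z \<in> {z. br m z \<in> span ?G}" using z(1) br_derivation[of m x y] by simp
  qed
  then have "span ?G \<subseteq> {z. br m z \<in> span ?G}"
    by (rule span_minimal[OF _ subspace_preimage_br_r[OF subspace_span]])
  then show ?case using Suc.prems by auto
qed

lemma derived_step:
  "x \<in> derived_series s br k \<Longrightarrow> y \<in> derived_series s br k \<Longrightarrow> br x y \<in> derived_series s br (Suc k)"
  by (auto intro!: span_base)

text \<open>In a solvable Lie algebra, a subalgebra M not contained in a subspace U contains an
  ideal A of M, not contained in U, with [A,A] \<subseteq> U: cut M with the last derived term
  whose intersection with M is not contained in U.\<close>
lemma solvable_section:
  assumes solv: "solvable_lie s br" and M: "lie_subalgebra s br M"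
    and U0: "0 \<in> U" and MU: "\<not> M \<subseteq> U"
  obtains A where "lie_subalgebra s br A" "A \<subseteq> M" "\<not> A \<subseteq> U"
    "\<And>a b. a \<in> A \<Longrightarrow> b \<in> A \<Longrightarrow> br a b \<in> U"
    "\<And>y a. y \<in> M \<Longrightarrow> a \<in> A \<Longrightarrow> br y a \<in> A"
proof -
  let ?K = "\<lambda>k. derived_series s br k \<inter> M \<subseteq> U"
  obtain n where "derived_series s br n = {0}" using solv unfolding solvable_lie_def by blast
  then have "?K n" using U0 by auto
  then obtain m where m: "?K m" and least: "\<And>k. k < m \<Longrightarrow> \<not> ?K k"
    using exists_least_iff[of ?K] by blast
  have "m \<noteq> 0" using m MU by auto
  then obtain k where mk: "m = Suc k" using not0_implies_Suc by blast
  define A where "A = derived_series s br k \<inter> M"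
  have D: "lie_subalgebra s br (derived_series s br k)"
    unfolding lie_subalgebra_def using derived_subspace derived_ideal by blast
  show ?thesis
  proof
    show "lie_subalgebra s br A" unfolding A_def by (rule subalgebra_Int[OF D M])
    show "A \<subseteq> M" "\<not> A \<subseteq> U" using least[of k] mk unfolding A_def by auto
    show "br a b \<in> U" if "a \<in> A" "b \<in> A" for a b
      using that m mk derived_step subalgebra_closed[OF M] unfolding A_def by blast
    show "br y a \<in> A" if "y \<in> M" "a \<in> A" for y a
      using that derived_ideal subalgebra_closed[OF M] unfolding A_def by blast
  qed
qed

subsection \<open>Quasi-ideals are modular\<close>

lemma dedekind:
  assumes C: "subspace C" and PC: "P \<subseteq> C"
  shows "set_sum P Q \<inter> C = set_sum P (Q \<inter> C)"
proof
  show "set_sum P Q \<inter> C \<subseteq> set_sum P (Q \<inter> C)"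
  proof
    fix z assume "z \<in> set_sum P Q \<inter> C"
    then obtain p q where z: "z = p + q" "p \<in> P" "q \<in> Q" "z \<in> C" unfolding set_sum_def by blast
    have "z - p \<in> C" using subspace_diff[OF C] z PC by blast
    then show "z \<in> set_sum P (Q \<inter> C)" using z unfolding set_sum_def by force
  qed
  show "set_sum P (Q \<inter> C) \<subseteq> set_sum P Q \<inter> C"
    using PC subspace_add[OF C] unfolding set_sum_def by blast
qed

lemma quasi_ideal_subalgebra: "quasi_ideal s br Q \<Longrightarrow> lie_subalgebra s br Q"
  unfolding quasi_ideal_def by blast

lemma quasi_ideal_gen:
  assumes qi: "quasi_ideal s br U" and B: "lie_subalgebra s br B"
  shows "gen s br (U \<union> B) = set_sum U B"
proof (rule gen_eqI)
  have U: "lie_subalgebra s br U" by (rule quasi_ideal_subalgebra[OF qi])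
  have sU: "subspace U" and sB: "subspace B" using U B subalgebra_subspace by auto
  have sP: "subspace (set_sum U B)" unfolding set_sum_def by (rule subspace_sums[OF sU sB])
  have UP: "U \<subseteq> set_sum U B" and BP: "B \<subseteq> set_sum U B"
    unfolding set_sum_def using subspace_0[OF sU] subspace_0[OF sB] by force+
  then show "U \<union> B \<subseteq> set_sum U B" by blast
  have cross: "br u b \<in> set_sum U B" if "u \<in> U" "b \<in> B" for u b
  proof -
    have "br u b \<in> span {br q v | q v. q \<in> U \<and> v \<in> B}" using that by (blast intro: span_base)
    then show ?thesis using qi sB unfolding quasi_ideal_def set_sum_def by blast
  qed
  have "br x y \<in> set_sum U B" if x: "x \<in> set_sum U B" and y: "y \<in> set_sum U B" for x y
  proof -
    obtain u b u' b' where xy: "x = u + b" "y = u' + b'" "u \<in> U" "b \<in> B" "u' \<in> U" "b' \<in> B"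
      using x y unfolding set_sum_def by blast
    have "br x y = (br u u' + br u b') + (- br u' b + br b b')"
      unfolding xy br_add_l br_add_r br_anti[of b u'] by (simp only: ac_simps)
    moreover have "br u u' \<in> set_sum U B" "br b b' \<in> set_sum U B"
      using UP BP subalgebra_closed[OF U] subalgebra_closed[OF B] xy by blast+
    ultimately show ?thesis
      using cross xy subspace_add[OF sP] subspace_neg[OF sP] by metis
  qed
  then show "lie_subalgebra s br (set_sum U B)" using sP unfolding lie_subalgebra_def by blast
  show "set_sum U B \<subseteq> gen s br (U \<union> B)" by (rule set_sum_subset_gen)
qed

lemma quasi_ideal_join_meet:
  assumes qi: "quasi_ideal s br U" and B: "lie_subalgebra s br B" and C: "lie_subalgebra s br C"
    and PC: "P \<subseteq> C" and PQ: "(P = U \<and> Q = B) \<or> (P = B \<and> Q = U)"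
  shows "gen s br (U \<union> B) \<inter> C = gen s br (P \<union> (Q \<inter> C))"
proof -
  have eq: "gen s br (U \<union> B) \<inter> C = set_sum P (Q \<inter> C)"
    using quasi_ideal_gen[OF qi B] dedekind[OF subalgebra_subspace[OF C] PC] PQ set_sum_commute
    by metis
  have "gen s br (P \<union> (Q \<inter> C)) = gen s br (U \<union> B) \<inter> C"
  proof (rule gen_eqI[OF subalgebra_Int[OF gen_subalgebra C]])
    show "P \<union> (Q \<inter> C) \<subseteq> gen s br (U \<union> B) \<inter> C" using gen_incl[of "U \<union> B"] PC PQ by blast
    show "gen s br (U \<union> B) \<inter> C \<subseteq> gen s br (P \<union> (Q \<inter> C))"
      unfolding eq by (rule set_sum_subset_gen)
  qed
  then show ?thesis by simp
qed

lemma quasi_ideal_modular: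
  assumes qi: "quasi_ideal s br U"
  shows "modular s br U"
  unfolding modular_def
proof (intro conjI allI impI; elim conjE)
  fix B C assume B: "lie_subalgebra s br B" and C: "lie_subalgebra s br C" and BC: "B \<subseteq> C"
  show "gen s br (U \<union> B) \<inter> C = gen s br (B \<union> (U \<inter> C))"
    using quasi_ideal_join_meet[OF qi B C BC] by blast
next
  fix B C assume B: "lie_subalgebra s br B" and C: "lie_subalgebra s br C" and UC: "U \<subseteq> C"
  show "gen s br (U \<union> B) \<inter> C = gen s br ((B \<inter> C) \<union> U)"
    using quasi_ideal_join_meet[OF qi B C UC] by (metis Un_commute)
qed

subsection \<open>Modular subalgebras are semi-modular\<close>

lemma modular_upper_modular:
  assumes U: "lie_subalgebra s br U" and m: "modular s br U"
  shows "upper_modular s br U"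
  unfolding upper_modular_def
proof (intro allI impI; elim conjE)
  fix B assume B: "lie_subalgebra s br B" and cov: "covers s br B (U \<inter> B)"
  let ?G = "gen s br (U \<union> B)"
  have UG: "U \<subseteq> ?G" and BG: "B \<subseteq> ?G" using gen_incl[of "U \<union> B"] by blast+
  have "?G \<noteq> U" using BG cov unfolding covers_def by blast
  moreover have "C = U \<or> C = ?G"
    if C: "lie_subalgebra s br C" and UC: "U \<subseteq> C" and CG: "C \<subseteq> ?G" for C
  proof -
    have "gen s br (U \<union> B) \<inter> C = gen s br ((B \<inter> C) \<union> U)"
      using m B C UC unfolding modular_def by blast
    then have C_eq: "C = gen s br ((B \<inter> C) \<union> U)" using CG by (simp add: inf.absorb2)
    have "B \<inter> C = U \<inter> B \<or> B \<inter> C = B"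
      using cov subalgebra_Int[OF B C] UC unfolding covers_def by blast
    then have "(B \<inter> C) \<union> U = U \<or> (B \<inter> C) \<union> U = U \<union> B" by blast
    then show ?thesis using C_eq gen_id[OF U] by auto
  qed
  ultimately show "covers s br ?G U" unfolding covers_def using U gen_subalgebra UG by blast
qed

lemma modular_lower_modular:
  assumes U: "lie_subalgebra s br U" and m: "modular s br U"
  shows "lower_modular s br U"
  unfolding lower_modular_def
proof (intro allI impI; elim conjE)
  fix B assume B: "lie_subalgebra s br B" and cov: "covers s br (gen s br (U \<union> B)) U"
  have BG: "B \<subseteq> gen s br (U \<union> B)" using gen_incl by blast
  have "U \<inter> B \<noteq> B"
  proof
    assume "U \<inter> B = B"
    then have "gen s br (U \<union> B) = U" using gen_id[OF U] by (simp add: Un_absorb2 inf.absorb_iff2)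
    then show False using cov unfolding covers_def by blast
  qed
  moreover have "C = U \<inter> B \<or> C = B"
    if C: "lie_subalgebra s br C" and UC: "U \<inter> B \<subseteq> C" and CB: "C \<subseteq> B" for C
  proof -
    have "gen s br (U \<union> C) \<inter> B = gen s br (C \<union> (U \<inter> B))"
      using m B C CB unfolding modular_def by blast
    then have eq: "gen s br (U \<union> C) \<inter> B = C" using UC gen_id[OF C] by (simp add: Un_absorb2)
    have "U \<subseteq> gen s br (U \<union> C)" using gen_incl by blast
    moreover have "gen s br (U \<union> C) \<subseteq> gen s br (U \<union> B)" using CB by (intro gen_mono) blast
    ultimately have "gen s br (U \<union> C) = U \<or> gen s br (U \<union> C) = gen s br (U \<union> B)"
      using cov gen_subalgebra unfolding covers_def by blast
    then show ?thesis using eq BG by blast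
  qed
  ultimately show "covers s br B (U \<inter> B)"
    unfolding covers_def using subalgebra_Int[OF U B] B by blast
qed

subsection \<open>Semi-modular subalgebras of solvable Lie algebras are quasi-ideals\<close>

lemma quasi_idealI:
  assumes Q: "lie_subalgebra s br Q" and line: "\<And>q v. q \<in> Q \<Longrightarrow> br q v \<in> span (insert v Q)"
  shows "quasi_ideal s br Q"
  unfolding quasi_ideal_def
proof (intro conjI allI impI)
  show "lie_subalgebra s br Q" by (rule Q)
  have sQ: "subspace Q" by (rule subalgebra_subspace[OF Q])
  fix V assume sV: "subspace V"
  have "br q v \<in> set_sum Q V" if q: "q \<in> Q" and v: "v \<in> V" for q v
  proof -
    obtain c where "br q v - s c v \<in> span Q" using line[OF q] span_breakdown_eq by blast
    then have "br q v - s c v \<in> Q" using sQ by (metis span_eq_iff)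
    moreover have "s c v \<in> V" using subspace_scale[OF sV v] .
    ultimately show ?thesis unfolding set_sum_def by force
  qed
  then show "span {br q v | q v. q \<in> Q \<and> v \<in> V} \<subseteq> {q + v | q v. q \<in> Q \<and> v \<in> V}"
    using subspace_sums[OF sQ sV] unfolding set_sum_def by (intro span_minimal) blast+
qed

lemma cover_is_line:
  assumes U: "lie_subalgebra s br U" and lm: "lower_modular s br U" and cov: "covers s br M U"
    and A: "lie_subalgebra s br A" "A \<subseteq> M"
    and AA: "\<And>a b. a \<in> A \<Longrightarrow> b \<in> A \<Longrightarrow> br a b \<in> U"
    and MA: "\<And>y a. y \<in> M \<Longrightarrow> a \<in> A \<Longrightarrow> br y a \<in> A"
    and a: "a \<in> A" "a \<notin> U"
  shows "M = span (insert a U)"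
proof -
  have M: "lie_subalgebra s br M" and UM: "U \<subseteq> M" using cov unfolding covers_def by blast+
  have "gen s br (U \<union> A) \<subseteq> M" using UM A by (intro gen_least[OF M]) blast
  moreover have "gen s br (U \<union> A) \<noteq> U" using gen_incl[of "U \<union> A"] a by blast
  ultimately have "gen s br (U \<union> A) = M"
    using cov gen_subalgebra gen_incl[of "U \<union> A"] unfolding covers_def by blast
  then have covA: "covers s br A (U \<inter> A)"
    using lm A(1) cov unfolding lower_modular_def by metis
  text \<open>Since [A,A] \<subseteq> U \<inter> A, the sum (U \<inter> A) + Fa is a subalgebra, so it is all of A.\<close>
  have "lie_subalgebra s br (span (insert a (U \<inter> A)))"
    using a AA subalgebra_closed[OF A(1)]
    by (intro subalgebra_span_insert subalgebra_Int[OF U A(1)]) (blast intro: span_base)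
  moreover have "span (insert a (U \<inter> A)) \<subseteq> A"
    using a subalgebra_subspace[OF A(1)] by (intro span_minimal) auto
  moreover have "a \<in> span (insert a (U \<inter> A))" by (simp add: span_base)
  ultimately have "span (insert a (U \<inter> A)) = A"
    using covA a span_superset[of "insert a (U \<inter> A)"] unfolding covers_def by blast
  then have "A \<subseteq> span (insert a U)" by (metis Int_lower1 insert_mono span_mono)
  text \<open>Hence [U,a] \<subseteq> A \<subseteq> U + Fa, so U + Fa is a subalgebra strictly between U and M.\<close>
  then have "lie_subalgebra s br (span (insert a U))"
    using MA UM a by (intro subalgebra_span_insert[OF U]) blast
  moreover have "span (insert a U) \<subseteq> M"
    using UM a A subalgebra_subspace[OF M] by (intro span_minimal) auto
  moreover have "U \<subseteq> span (insert a U)" "a \<in> span (insert a U)"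
    using span_superset[of "insert a U"] by auto
  ultimately show ?thesis using cov a unfolding covers_def by blast
qed

lemma semi_modular_join_line:
  assumes U: "lie_subalgebra s br U" and solv: "solvable_lie s br"
    and sm: "semi_modular s br U" and x: "x \<notin> U"
  shows "gen s br (U \<union> span {x}) = span (insert x U)"
proof -
  have sU: "subspace U" by (rule subalgebra_subspace[OF U])
  define M where "M = gen s br (U \<union> span {x})"
  have line: "covers s br (span {x}) (U \<inter> span {x})" by (rule covers_line[OF U x])
  then have "lie_subalgebra s br (span {x})" unfolding covers_def by blast
  then have cov: "covers s br M U"
    using sm line unfolding semi_modular_def upper_modular_def M_def by blast
  have M: "lie_subalgebra s br M" unfolding M_def by (rule gen_subalgebra)
  have xM: "x \<in> M" using gen_incl[of "U \<union> span {x}"] span_base[of x "{x}"] unfolding M_def by blast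
  obtain A where A: "lie_subalgebra s br A" "A \<subseteq> M" "\<not> A \<subseteq> U"
    and AA: "\<And>a b. a \<in> A \<Longrightarrow> b \<in> A \<Longrightarrow> br a b \<in> U"
    and MA: "\<And>y a. y \<in> M \<Longrightarrow> a \<in> A \<Longrightarrow> br y a \<in> A"
    using solvable_section[OF solv M subspace_0[OF sU]] xM x by blast
  obtain a where a: "a \<in> A" "a \<notin> U" using A(3) by blast
  have Ma: "M = span (insert a U)"
    using cover_is_line[OF U _ cov A(1,2) AA MA a] sm unfolding semi_modular_def by blast
  text \<open>Exchange a for x: x \<in> U + Fa and x \<notin> U give a \<in> U + Fx.\<close>
  have "x \<notin> span U" using x sU by (metis span_eq_iff)
  then have "a \<in> span (insert x U)" using in_span_insert[of x a U] xM Ma by blast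
  then have "M \<subseteq> span (insert x U)" unfolding Ma
    by (intro span_minimal) (auto intro: span_base)
  moreover have "span (insert x U) \<subseteq> M"
    using xM Ma span_superset[of "insert a U"] by (intro span_minimal) auto
  ultimately show ?thesis unfolding M_def by blast
qed

lemma semi_modular_quasi_ideal:
  assumes U: "lie_subalgebra s br U" and solv: "solvable_lie s br" and sm: "semi_modular s br U"
  shows "quasi_ideal s br U"
proof (rule quasi_idealI[OF U])
  fix u v assume u: "u \<in> U"
  show "br u v \<in> span (insert v U)"
  proof (cases "v \<in> U")
    case True then show ?thesis using subalgebra_closed[OF U u] by (blast intro: span_base)
  next
    case False
    have "u \<in> gen s br (U \<union> span {v})" "v \<in> gen s br (U \<union> span {v})"
      using u gen_incl[of "U \<union> span {v}"] span_base[of v "{v}"] by blast+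
    then show ?thesis
      using subalgebra_closed[OF gen_subalgebra] semi_modular_join_line[OF U solv sm False] by metis
  qed
qed

end

theorem theorem2p3:
  fixes s :: "'k::field \<Rightarrow> 'v::ab_group_add \<Rightarrow> 'v"
    and br :: "'v \<Rightarrow> 'v \<Rightarrow> 'v"
    and U :: "'v set"
  assumes "lie_algebra s br"
    and "fin_dim s"
    and "solvable_lie s br"
    and "lie_subalgebra s br U"
    and "U \<noteq> UNIV"
  shows "(modular s br U \<longleftrightarrow> semi_modular s br U)
       \<and> (semi_modular s br U \<longleftrightarrow> quasi_ideal s br U)"
proof -
  interpret lie s br by unfold_locales (rule assms(1))
  have "modular s br U \<Longrightarrow> semi_modular s br U"
    unfolding semi_modular_def using modular_upper_modular modular_lower_modular assms(4) by blast
  moreover have "semi_modular s br U \<Longrightarrow> quasi_ideal s br U"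
    using semi_modular_quasi_ideal assms(3,4) by blast
  moreover have "quasi_ideal s br U \<Longrightarrow> modular s br U"
    by (rule quasi_ideal_modular)
  ultimately show ?thesis by blast
qed

end
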